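(* Let $G$ be a connected signed digraph with $n$ vertices that is not a signed cycle. Then there exists a degree-bounded finite dynamical system $f$ on $G$ such that $f^{n+1}$ is a constant map.
   Context: A finite dynamical system (FDS) with $n$ components is a map $f=(f_1,\dots,f_n):X\to X$ where $X=X_1\times\cdots\times X_n$ and each $X_i$ is a nonempty finite interval of integers; $f^k$ denotes the $k$-fold composition of $f$ with itself. A signed digraph is a pair $G=(V,E)$ with $E\subseteq V\times V\times\{+,-\}$; $(j,i,s)\in E$ is an arc from $j$ to $i$ of sign $s$ (loops are allowed, and $G$ may have both a positive and a negative arc from $j$ to $i$, called parallel arcs). Write $G^+_i=\{j:(j,i,+)\in E\}$, $G^-_i=\{j:(j,i,-)\in E\}$, $G_i=G^+_i\cup G^-_i$. The in-degree of $i$ is $d^{\mathrm{in}}_G(i)=|G^+_i|+|G^-_i|$ and the out-degree $d^{\mathrm{out}}_G(i)$ is the number of positive arcs leaving $i$ plus the number of negative arcs leaving $i$. $G$ is connected if its underlying undirected graph is connected. The underlying unsigned digraph $|G|$ has vertex set $V$ and an arc from $j$ to $i$ iff $j\in G_i$. $G$ is a signed cycle if $|G|$ is a directed cycle (through all vertices, each exactly once; a single vertex with a loop counts) and $G$ has no parallel arcs. The interaction graph of an FDS $f$ with $n$ components is the signed digraph on vertex set $\{1,\dots,n\}$ having a positive (resp. negative) arc from $j$ to $i$ iff there is $x\in X$ with $x_j<\max(X_j)$ such that $f_i(x+e_j)-f_i(x)$ is positive (resp. negative), where $e_j$ is the $j$-th unit vector. $f$ is an FDS on $G$ if $G$ is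 its interaction graph. $f$ is degree-bounded if, with $G$ its interaction graph, for every $i$: $|X_i|=2$ if $d^{\mathrm{out}}_G(i)=0<d^{\mathrm{in}}_G(i)$, and $|X_i|\le d^{\mathrm{out}}_G(i)+1$ otherwise. *)

theory Defs
  imports Main
begin

text \<open>A signed digraph on the vertex set {0..<n} is given by its arc set
  E :: (nat \<times> nat \<times> bool) set; (j, i, True) is a positive arc from j to i,
  (j, i, False) a negative arc from j to i.\<close>

definition signed_digraph :: "nat \<Rightarrow> (nat \<times> nat \<times> bool) set \<Rightarrow> bool" where
  "signed_digraph n E \<longleftrightarrow> (\<forall>(j, i, s) \<in> E. j < n \<and> i < n)"

definition in_pos :: "(nat \<times> nat \<times> bool) set \<Rightarrow> nat \<Rightarrow> nat set" where
  "in_pos E i = {j. (j, i, True) \<in> E}"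

definition in_neg :: "(nat \<times> nat \<times> bool) set \<Rightarrow> nat \<Rightarrow> nat set" where
  "in_neg E i = {j. (j, i, False) \<in> E}"

definition in_degree :: "(nat \<times> nat \<times> bool) set \<Rightarrow> nat \<Rightarrow> nat" where
  "in_degree E i = card (in_pos E i) + card (in_neg E i)"

definition out_degree :: "(nat \<times> nat \<times> bool) set \<Rightarrow> nat \<Rightarrow> nat" where
  "out_degree E i = card {k. (i, k, True) \<in> E} + card {k. (i, k, False) \<in> E}"

definition unsigned_arcs :: "(nat \<times> nat \<times> bool) set \<Rightarrow> (nat \<times> nat) set" where
  "unsigned_arcs E = {(j, i). \<exists>s. (j, i, s) \<in> E}"

definition connected_sd :: "nat \<Rightarrow> (nat \<times> nat \<times> bool) set \<Rightarrow> bool" where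
  "connected_sd n E \<longleftrightarrow>
     (\<forall>u < n. \<forall>v < n. (u, v) \<in> (unsigned_arcs E \<union> (unsigned_arcs E)\<inverse>)\<^sup>*)"

definition signed_cycle :: "nat \<Rightarrow> (nat \<times> nat \<times> bool) set \<Rightarrow> bool" where
  "signed_cycle n E \<longleftrightarrow>
     (\<exists>vs. vs \<noteq> [] \<and> distinct vs \<and> set vs = {0..<n} \<and>
        unsigned_arcs E = {(vs ! k, vs ! ((k + 1) mod length vs)) | k. k < length vs}) \<and>
     \<not> (\<exists>j i. (j, i, True) \<in> E \<and> (j, i, False) \<in> E)"

definition state_space :: "nat \<Rightarrow> (nat \<Rightarrow> int) \<Rightarrow> (nat \<Rightarrow> int) \<Rightarrow> (nat \<Rightarrow> int) set" where
  "state_space n lo hi = {x. (\<forall>i < n. lo i \<le> x i \<and> x i \<le> hi i) \<and> (\<forall>i \<ge> n. x i = 0)}"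

definition is_FDS :: "nat \<Rightarrow> (nat \<Rightarrow> int) \<Rightarrow> (nat \<Rightarrow> int) \<Rightarrow> ((nat \<Rightarrow> int) \<Rightarrow> (nat \<Rightarrow> int)) \<Rightarrow> bool" where
  "is_FDS n lo hi f \<longleftrightarrow> (\<forall>i < n. lo i \<le> hi i) \<and>
     (\<forall>x \<in> state_space n lo hi. f x \<in> state_space n lo hi)"

definition interaction_graph ::
  "nat \<Rightarrow> (nat \<Rightarrow> int) \<Rightarrow> (nat \<Rightarrow> int) \<Rightarrow> ((nat \<Rightarrow> int) \<Rightarrow> (nat \<Rightarrow> int)) \<Rightarrow> (nat \<times> nat \<times> bool) set" where
  "interaction_graph n lo hi f =
     {(j, i, s). j < n \<and> i < n \<and>
        (\<exists>x \<in> state_space n lo hi. x j < hi j \<and>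
           (if s then f (x(j := x j + 1)) i - f x i > 0
                 else f (x(j := x j + 1)) i - f x i < 0))}"

definition degree_bounded ::
  "nat \<Rightarrow> (nat \<Rightarrow> int) \<Rightarrow> (nat \<Rightarrow> int) \<Rightarrow> ((nat \<Rightarrow> int) \<Rightarrow> (nat \<Rightarrow> int)) \<Rightarrow> bool" where
  "degree_bounded n lo hi f \<longleftrightarrow>
     (let E = interaction_graph n lo hi f in
       \<forall>i < n. (if out_degree E i = 0 \<and> 0 < in_degree E i
                 then card {lo i..hi i} = 2
                 else card {lo i..hi i} \<le> out_degree E i + 1))"

end

theory Submission
  imports Defs "HOL-Combinatorics.Orbits"
begin

text \<open>Call a vertex a root if it is a source or has out-degree at least 2. Every vertex is
  reachable from a root: the vertices that are not have in-degree at least 1 and out-degree at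
  most 1, and counting arcs shows that they form a set closed under arcs in both directions, hence
  either nothing or, by connectivity, a signed cycle through all of G. So every non-root vertex v
  has an in-neighbour parent v that is strictly closer to the roots, all distances being below n.

  Each non-source vertex i computes, possibly negated, the conjunction of one literal per
  in-neighbour j, a threshold condition on the value of j. The literals and the negation flags are
  chosen so that each literal changes along its coordinate exactly in the directions prescribed
  by the signs of the arcs from j to i, within domains of the size allowed by the degree bound.
  Moreover the literal along the parent arc is false on a set of quiet values of the parent.
  Roots only ever take quiet values, and a vertex whose parent is quiet takes a fixed rest value
  at the next step, which is quiet again. By induction on the distance to the roots, after n + 1
  steps every vertex is at rest.\<close>

section \<open>Connected permutations are cycles\<close>

lemma connected_permutation_orbit:
  fixes f :: "'a \<Rightarrow> 'a" and V :: "'a set"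
  defines "G \<equiv> {(u, f u) | u. u \<in> V}"
  assumes perm: "f permutes V" and fin: "finite V" and x: "x \<in> V"
    and conn: "\<And>v. v \<in> V \<Longrightarrow> (x, v) \<in> (G \<union> G\<inverse>)\<^sup>*"
  shows "orbit f x = V"
proof
  have permutation: "permutation f" using perm fin by (auto simp: permutation_permutes)
  have orbit_of_member: "orbit f y = orbit f x" if "y \<in> orbit f x" for y
    by (rule orbit_cyclic_eq3[OF cyclic_on_orbit[OF perm fin] that])
  show "V \<subseteq> orbit f x"
  proof
    fix v assume "v \<in> V"
    with conn have "(x, v) \<in> (G \<union> G\<inverse>)\<^sup>*" by blast
    then show "v \<in> orbit f x"
    proof (induction rule: rtrancl_induct)
      case base
      show ?case by (rule permutation_self_in_orbit[OF permutation])
    next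
      case (step a b)
      from step.hyps(2) consider "b = f a" | "a = f b" unfolding G_def by blast
      then show ?case
      proof cases
        case 1
        with step.IH show ?thesis by (simp add: orbit.step)
      next
        case 2
        have "orbit f b = orbit f (f b)" by (simp add: permutation_orbit_step[OF permutation])
        also have "\<dots> = orbit f x" using 2 step.IH orbit_of_member by simp
        finally show ?thesis using permutation_self_in_orbit[OF permutation, of b] by simp
      qed
    qed
  qed
  show "orbit f x \<subseteq> V" by (rule permutes_orbit_subset[OF perm x])
qed

lemma connected_permutation_cycle_list:
  fixes f :: "'a \<Rightarrow> 'a" and V :: "'a set"
  defines "G \<equiv> {(u, f u) | u. u \<in> V}"
  assumes perm: "f permutes V" and fin: "finite V" and x: "x \<in> V"
    and conn: "\<And>v. v \<in> V \<Longrightarrow> (x, v) \<in> (G \<union> G\<inverse>)\<^sup>*"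
  shows "\<exists>vs. vs \<noteq> [] \<and> distinct vs \<and> set vs = V \<and>
           G = {(vs ! k, vs ! ((k + 1) mod length vs)) | k. k < length vs}"
proof -
  have orbit_eq: "orbit f x = V" using connected_permutation_orbit[OF perm fin x] conn G_def by blast
  have x_orbit: "x \<in> orbit f x" using orbit_eq x by simp
  define m where "m = funpow_dist1 f x x"
  have period: "(f ^^ m) x = x" unfolding m_def by (rule funpow_dist1_prop[OF x_orbit])
  define vs where "vs = map (\<lambda>k. (f ^^ k) x) [0..<m]"
  have len: "length vs = m" and nth: "\<And>k. k < m \<Longrightarrow> vs ! k = (f ^^ k) x"
    unfolding vs_def by simp_all
  have "inj_on (\<lambda>k. (f ^^ k) x) {0..<m}"
    unfolding m_def by (rule inj_on_funpow_dist1[OF x_orbit])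
  then have "distinct vs" by (simp add: vs_def distinct_map)
  moreover have set_vs: "set vs = V"
    unfolding vs_def set_map set_upt m_def orbit_conv_funpow_dist1[OF x_orbit, symmetric]
    by (rule orbit_eq)
  moreover have "vs \<noteq> []" using len by (auto simp: m_def)
  moreover have "G = {(vs ! k, vs ! ((k + 1) mod length vs)) | k. k < length vs}"
  proof -
    have step: "vs ! ((k + 1) mod m) = f (vs ! k)" if "k < m" for k
      using that nth funpow_mod_eq[OF period, of "k + 1"] by (simp add: m_def)
    have "{(vs ! k, vs ! ((k + 1) mod length vs)) | k. k < length vs} = (\<lambda>u. (u, f u)) ` set vs"
      unfolding len using step len by (force simp: in_set_conv_nth)
    then show ?thesis unfolding G_def set_vs by blast
  qed
  ultimately show ?thesis by blast
qed

section \<open>Degree counting\<close>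

lemma card_split_sign:
  fixes A :: "('a \<times> bool) set"
  assumes "finite A"
  shows "card A = card {x. (x, True) \<in> A} + card {x. (x, False) \<in> A}"
proof -
  have fin: "finite {x. (x, b) \<in> A}" for b
    using finite_vimageI[OF assms, of "\<lambda>x. (x, b)"] by (simp add: inj_on_def vimage_def)
  have "A = (\<lambda>x. (x, True)) ` {x. (x, True) \<in> A} \<union> (\<lambda>x. (x, False)) ` {x. (x, False) \<in> A}"
  proof (intro set_eqI iffI)
    fix e assume "e \<in> A"
    then show "e \<in> (\<lambda>x. (x, True)) ` {x. (x, True) \<in> A} \<union> (\<lambda>x. (x, False)) ` {x. (x, False) \<in> A}"
      by (cases e; cases "snd e") auto
  qed auto
  also have "card \<dots> = card {x. (x, True) \<in> A} + card {x. (x, False) \<in> A}"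
    using fin by (subst card_Un_disjoint) (auto simp: card_image inj_on_def)
  finally show ?thesis .
qed

locale signed_graph =
  fixes n :: nat and E :: "(nat \<times> nat \<times> bool) set"
  assumes signed_digraph: "signed_digraph n E"
begin

lemma arc_bounds: "(j, i, s) \<in> E \<Longrightarrow> j < n \<and> i < n"
  using signed_digraph unfolding signed_digraph_def by auto

lemma finite_arcs: "finite E"
proof (rule finite_subset)
  show "E \<subseteq> {..<n} \<times> {..<n} \<times> UNIV" using arc_bounds by auto
qed simp

lemma finite_arcs_filter: "finite {(j, i, s) \<in> E. P j i s}"
  by (rule finite_subset[OF _ finite_arcs]) auto

lemma in_degree_eq_card: "in_degree E w = card {(j, i, s) \<in> E. i = w}"
proof -
  have "{(j, i, s) \<in> E. i = w} = (\<lambda>(j, s). (j, w, s)) ` {(j, s). (j, w, s) \<in> E}" by force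
  moreover have "finite {(j, s). (j, w, s) \<in> E}"
    by (rule finite_subset[OF _ finite_vimageI[OF finite_arcs, of "\<lambda>(j, s). (j, w, s)"]])
      (auto simp: inj_on_def)
  ultimately show ?thesis
    unfolding in_degree_def in_pos_def in_neg_def
    by (simp add: card_image inj_on_def card_split_sign)
qed

lemma out_degree_eq_card: "out_degree E w = card {(j, i, s) \<in> E. j = w}"
proof -
  have "{(j, i, s) \<in> E. j = w} = (\<lambda>(i, s). (w, i, s)) ` {(i, s). (w, i, s) \<in> E}" by force
  moreover have "finite {(i, s). (w, i, s) \<in> E}"
    by (rule finite_subset[OF _ finite_vimageI[OF finite_arcs, of "\<lambda>(i, s). (w, i, s)"]])
      (auto simp: inj_on_def)
  ultimately show ?thesis
    unfolding out_degree_def by (simp add: card_image inj_on_def card_split_sign)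
qed


lemma card_arcs_into: "finite W \<Longrightarrow> card {(j, i, s) \<in> E. i \<in> W} = (\<Sum>w\<in>W. in_degree E w)"
proof -
  assume W: "finite W"
  have "card {(j, i, s) \<in> E. i \<in> W} = card (\<Union>w\<in>W. {(j, i, s) \<in> E. i = w})"
    by (rule arg_cong[where f = card]) auto
  also have "\<dots> = (\<Sum>w\<in>W. card {(j, i, s) \<in> E. i = w})"
    by (rule card_UN_disjoint[OF W]) (auto intro: finite_arcs_filter)
  finally show ?thesis by (simp add: in_degree_eq_card)
qed

lemma card_arcs_from: "finite W \<Longrightarrow> card {(j, i, s) \<in> E. j \<in> W} = (\<Sum>w\<in>W. out_degree E w)"
proof -
  assume W: "finite W"
  have "card {(j, i, s) \<in> E. j \<in> W} = card (\<Union>w\<in>W. {(j, i, s) \<in> E. j = w})"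
    by (rule arg_cong[where f = card]) auto
  also have "\<dots> = (\<Sum>w\<in>W. card {(j, i, s) \<in> E. j = w})"
    by (rule card_UN_disjoint[OF W]) (auto intro: finite_arcs_filter)
  finally show ?thesis by (simp add: out_degree_eq_card)
qed

lemma in_degree_eq_0_iff: "in_degree E v = 0 \<longleftrightarrow> (\<forall>j s. (j, v, s) \<notin> E)"
  unfolding in_degree_eq_card using finite_arcs_filter[of "\<lambda>j i s. i = v"] by auto

lemma out_degree_eq_0_iff: "out_degree E v = 0 \<longleftrightarrow> (\<forall>i s. (v, i, s) \<notin> E)"
  unfolding out_degree_eq_card using finite_arcs_filter[of "\<lambda>j i s. j = v"] by auto

lemma in_degree_1_unique:
  assumes "in_degree E v = 1" and "(j, v, s) \<in> E" and "(j', v, s') \<in> E"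
  shows "j = j' \<and> s = s'"
proof -
  obtain e where "{(j, i, s) \<in> E. i = v} = {e}"
    using assms(1) by (auto simp: in_degree_eq_card card_1_singleton_iff)
  with assms(2,3) show ?thesis by (metis (mono_tags, lifting) case_prodI mem_Collect_eq prod.inject singletonD)
qed

lemma out_degree_1_unique:
  assumes "out_degree E v = 1" and "(v, i, s) \<in> E" and "(v, i', s') \<in> E"
  shows "i = i' \<and> s = s'"
proof -
  obtain e where "{(j, i, s) \<in> E. j = v} = {e}"
    using assms(1) by (auto simp: out_degree_eq_card card_1_singleton_iff)
  with assms(2,3) show ?thesis by (metis (mono_tags, lifting) case_prodI mem_Collect_eq prod.inject singletonD)
qed

text \<open>All arcs into W start in W, so W has at least as many outgoing as incoming arcs; the
  degree bounds force equality everywhere.\<close>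

lemma balanced_set_closed:
  assumes W: "W \<subseteq> {..<n}"
    and deg: "\<And>w. w \<in> W \<Longrightarrow> 1 \<le> in_degree E w \<and> out_degree E w \<le> 1"
    and closed_in: "\<And>j i s. (j, i, s) \<in> E \<Longrightarrow> i \<in> W \<Longrightarrow> j \<in> W"
  shows "(j, i, s) \<in> E \<Longrightarrow> j \<in> W \<Longrightarrow> i \<in> W"
    and "w \<in> W \<Longrightarrow> in_degree E w = 1 \<and> out_degree E w = 1"
proof -
  have finW: "finite W" using W finite_subset by blast
  define A_in where "A_in = {(j, i, s) \<in> E. i \<in> W}"
  define A_out where "A_out = {(j, i, s) \<in> E. j \<in> W}"
  have sub: "A_in \<subseteq> A_out" using closed_in unfolding A_in_def A_out_def by auto
  have "(\<Sum>w\<in>W. 1) \<le> (\<Sum>w\<in>W. in_degree E w)" by (rule sum_mono) (use deg in auto)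
  moreover have "(\<Sum>w\<in>W. out_degree E w) \<le> (\<Sum>w\<in>W. 1)" by (rule sum_mono) (use deg in auto)
  moreover have "card A_in \<le> card A_out"
    by (rule card_mono[OF _ sub]) (simp add: A_out_def finite_arcs_filter)
  moreover have "card A_in = (\<Sum>w\<in>W. in_degree E w)"
    unfolding A_in_def by (rule card_arcs_into[OF finW])
  moreover have "card A_out = (\<Sum>w\<in>W. out_degree E w)"
    unfolding A_out_def by (rule card_arcs_from[OF finW])
  ultimately have sums: "(\<Sum>w\<in>W. in_degree E w) = (\<Sum>w\<in>W. 1)" "(\<Sum>w\<in>W. out_degree E w) = (\<Sum>w\<in>W. 1)"
    and cards: "card A_in = card A_out"
    by linarith+
  have "A_in = A_out" by (rule card_subset_eq[OF _ sub cards]) (simp add: A_out_def finite_arcs_filter)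
  then show "(j, i, s) \<in> E \<Longrightarrow> j \<in> W \<Longrightarrow> i \<in> W" unfolding A_in_def A_out_def by blast
  show "w \<in> W \<Longrightarrow> in_degree E w = 1 \<and> out_degree E w = 1"
    using sum_mono_inv[OF sums(1)[symmetric]] sum_mono_inv[OF sums(2)] deg finW by auto
qed

lemma connected_closed_set:
  assumes conn: "connected_sd n E" and u: "u \<in> A" and A: "A \<subseteq> {..<n}"
    and closed: "\<And>j i s. (j, i, s) \<in> E \<Longrightarrow> j \<in> A \<longleftrightarrow> i \<in> A"
  shows "A = {..<n}"
proof
  show "{..<n} \<subseteq> A"
  proof
    fix v assume "v \<in> {..<n}"
    with conn u A have "(u, v) \<in> (unsigned_arcs E \<union> (unsigned_arcs E)\<inverse>)\<^sup>*"
      unfolding connected_sd_def by blast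
    then show "v \<in> A"
      by (induction rule: rtrancl_induct) (use u closed in \<open>auto simp: unsigned_arcs_def\<close>)
  qed
qed (rule A)

lemma degree_one_signed_cycle:
  assumes pos: "0 < n" and conn: "connected_sd n E"
    and deg: "\<And>v. v < n \<Longrightarrow> in_degree E v = 1 \<and> out_degree E v = 1"
  shows "signed_cycle n E"
proof -
  define succ where "succ v = (if v < n then SOME i. \<exists>s. (v, i, s) \<in> E else v)" for v
  have succ_arc: "\<exists>s. (v, succ v, s) \<in> E" if "v < n" for v
  proof -
    have "\<exists>i s. (v, i, s) \<in> E" using deg[OF that] out_degree_eq_0_iff[of v] by auto
    then have "\<exists>s. (v, SOME i. \<exists>s. (v, i, s) \<in> E, s) \<in> E" by (rule someI_ex)
    then show ?thesis unfolding succ_def using that by simp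
  qed
  have arc_succ: "i = succ v" if "(v, i, s) \<in> E" for v i s
    using succ_arc[of v] arc_bounds[OF that] out_degree_1_unique[OF _ that] deg by blast
  have arcs: "unsigned_arcs E = {(v, succ v) | v. v \<in> {..<n}}"
    unfolding unsigned_arcs_def using succ_arc arc_succ arc_bounds by fastforce
  have "inj_on succ {..<n}"
  proof (rule inj_onI)
    fix u v assume "u \<in> {..<n}" "v \<in> {..<n}" "succ u = succ v"
    then show "u = v" using succ_arc in_degree_1_unique deg arc_bounds by (metis lessThan_iff)
  qed
  moreover have "succ ` {..<n} \<subseteq> {..<n}" using succ_arc arc_bounds by blast
  ultimately have "bij_betw succ {..<n} {..<n}" by (simp add: bij_betw_def endo_inj_surj)
  then have "succ permutes {..<n}" by (rule bij_imp_permutes) (simp add: succ_def)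
  then obtain vs where "vs \<noteq> []" "distinct vs" "set vs = {..<n}"
    "{(v, succ v) | v. v \<in> {..<n}} = {(vs ! k, vs ! ((k + 1) mod length vs)) | k. k < length vs}"
    using connected_permutation_cycle_list[of succ "{..<n}" 0] pos conn
    unfolding connected_sd_def arcs by auto
  moreover have "\<not> (\<exists>j i. (j, i, True) \<in> E \<and> (j, i, False) \<in> E)"
    using in_degree_1_unique deg arc_bounds by blast
  ultimately show ?thesis unfolding signed_cycle_def arcs by (auto simp: atLeast0LessThan)
qed

section \<open>Distance to the roots\<close>

definition is_root :: "nat \<Rightarrow> bool" where
  "is_root v \<longleftrightarrow> in_degree E v = 0 \<or> 2 \<le> out_degree E v"

primrec layer :: "nat \<Rightarrow> nat set" where
  "layer 0 = {v. v < n \<and> is_root v}"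
| "layer (Suc t) = layer t \<union> {i. \<exists>j \<in> layer t. \<exists>s. (j, i, s) \<in> E}"

lemma layer_subset: "layer t \<subseteq> {..<n}"
  by (induction t) (auto dest: arc_bounds)

lemma roots_in_layer: "v < n \<Longrightarrow> is_root v \<Longrightarrow> v \<in> layer t"
  by (induction t) auto

definition root_distance :: "nat \<Rightarrow> nat" where
  "root_distance v = (LEAST t. v \<in> layer t)"

context
  assumes conn: "connected_sd n E" and not_cycle: "\<not> signed_cycle n E"
begin

lemma closed_superset_of_roots:
  assumes S: "S \<subseteq> {..<n}" and roots: "\<And>v. v < n \<Longrightarrow> is_root v \<Longrightarrow> v \<in> S"
    and closed: "\<And>j i s. (j, i, s) \<in> E \<Longrightarrow> j \<in> S \<Longrightarrow> i \<in> S"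
  shows "S = {..<n}"
proof -
  define W where "W = {..<n} - S"
  have W: "W \<subseteq> {..<n}" unfolding W_def by blast
  have W_deg: "1 \<le> in_degree E w \<and> out_degree E w \<le> 1" if "w \<in> W" for w
  proof -
    have "\<not> is_root w" using roots[of w] that unfolding W_def by blast
    then show ?thesis unfolding is_root_def by linarith
  qed
  have W_closed_in: "j \<in> W" if "(j, i, s) \<in> E" "i \<in> W" for j i s
    using closed[OF that(1)] arc_bounds[OF that(1)] that(2) unfolding W_def by blast
  have W_closed_out: "i \<in> W" if "(j, i, s) \<in> E" "j \<in> W" for j i s
    by (rule balanced_set_closed(1)[OF W W_deg W_closed_in that])
  show ?thesis
  proof (cases "S = {}")
    case True
    have "\<not> 0 < n"
    proof
      assume "0 < n"
      moreover have "in_degree E v = 1 \<and> out_degree E v = 1" if "v < n" for v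
        using balanced_set_closed(2)[OF W W_deg W_closed_in, where w = v] that True unfolding W_def by simp
      ultimately show False using degree_one_signed_cycle conn not_cycle by blast
    qed
    with True show ?thesis by simp
  next
    case False
    then obtain u where "u \<in> S" by blast
    moreover have "j \<in> S \<longleftrightarrow> i \<in> S" if "(j, i, s) \<in> E" for j i s
      using closed[OF that] W_closed_out[OF that] arc_bounds[OF that] unfolding W_def by blast
    ultimately show ?thesis using connected_closed_set[OF conn _ S] by blast
  qed
qed

lemma layer_card: "layer t = {..<n} \<or> t < card (layer t)"
proof (induction t)
  case 0
  show ?case
  proof (cases "layer 0 = {}")
    case True
    have "{} = {..<n}" by (rule closed_superset_of_roots) (use True in auto)
    then show ?thesis using True by simp
  next
    case False
    then show ?thesis using finite_subset[OF layer_subset] by (simp add: card_gt_0_iff)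
  qed
next
  case (Suc t)
  show ?case
  proof (cases "layer t = {..<n}")
    case True
    then show ?thesis using layer_subset[of "Suc t"] by auto
  next
    case False
    have "layer t \<noteq> layer (Suc t)"
    proof
      assume eq: "layer t = layer (Suc t)"
      have "layer t = {..<n}"
      proof (rule closed_superset_of_roots[OF layer_subset roots_in_layer])
        fix j i s assume "(j, i, s) \<in> E" "j \<in> layer t"
        then have "i \<in> layer (Suc t)" by auto
        then show "i \<in> layer t" using eq by blast
      qed
      with False show False ..
    qed
    then have "layer t \<subset> layer (Suc t)" by auto
    then have "card (layer t) < card (layer (Suc t))"
      by (rule psubset_card_mono[OF finite_subset[OF layer_subset finite_lessThan]])
    with Suc False show ?thesis by simp
  qed
qed

lemma root_distance_less: "v < n \<Longrightarrow> v \<in> layer (root_distance v) \<and> root_distance v < n"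
proof -
  assume v: "v < n"
  have "layer (n - 1) = {..<n}"
  proof (rule ccontr)
    assume ne: "layer (n - 1) \<noteq> {..<n}"
    then have "n - 1 < card (layer (n - 1))" using layer_card by blast
    moreover have "card (layer (n - 1)) \<le> n" using card_mono[OF _ layer_subset] by fastforce
    ultimately have "card (layer (n - 1)) = card {..<n}" by simp
    then show False using ne card_subset_eq[OF _ layer_subset] by blast
  qed
  with v have "v \<in> layer (n - 1)" by simp
  then have "v \<in> layer (root_distance v)" "root_distance v \<le> n - 1"
    unfolding root_distance_def by (auto intro: LeastI Least_le)
  with v show ?thesis by simp
qed

lemma closer_in_neighbour:
  assumes v: "v < n" and not_root: "\<not> is_root v"
  shows "\<exists>u s. (u, v, s) \<in> E \<and> root_distance u < root_distance v"
proof -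
  have v_layer: "v \<in> layer (root_distance v)" using root_distance_less[OF v] by blast
  have "v \<notin> layer 0" using not_root by simp
  with v_layer obtain t where t: "root_distance v = Suc t" by (cases "root_distance v") auto
  then have "v \<notin> layer t" using not_less_Least[of t "\<lambda>t. v \<in> layer t"] unfolding root_distance_def by simp
  then obtain u s where u: "u \<in> layer t" "(u, v, s) \<in> E" using v_layer t by auto
  have "root_distance u \<le> t" unfolding root_distance_def using u(1) by (rule Least_le)
  with u t show ?thesis by auto
qed

lemma ex_parent_rank:
  "\<exists>parent rank. (\<forall>v < n. in_degree E v \<noteq> 0 \<longrightarrow> (\<exists>s. (parent v, v, s) \<in> E)) \<and>
     (\<forall>v < n. \<not> is_root v \<longrightarrow> rank (parent v) < rank v) \<and> (\<forall>v < n. rank v < n)"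
proof -
  define parent where
    "parent v = (SOME u. \<exists>s. (u, v, s) \<in> E \<and> (is_root v \<or> root_distance u < root_distance v))" for v
  have "\<exists>s. (parent v, v, s) \<in> E \<and> (is_root v \<or> root_distance (parent v) < root_distance v)"
    if "v < n" "in_degree E v \<noteq> 0" for v
  proof -
    have "\<exists>u s. (u, v, s) \<in> E \<and> (is_root v \<or> root_distance u < root_distance v)"
    proof (cases "is_root v")
      case True
      then show ?thesis using that(2) in_degree_eq_0_iff[of v] by auto
    next
      case False
      then show ?thesis using closer_in_neighbour[OF that(1)] by blast
    qed
    then show ?thesis unfolding parent_def by (rule someI2_ex) blast
  qed
  then show ?thesis using root_distance_less unfolding is_root_def by blast
qed

end

end

section \<open>The construction\<close>

definition switches_to :: "(int \<Rightarrow> bool) \<Rightarrow> int \<Rightarrow> bool \<Rightarrow> bool" where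
  "switches_to P h b \<longleftrightarrow> (\<exists>k. 0 \<le> k \<and> k < h \<and> P k \<noteq> b \<and> P (k + 1) = b)"

lemma switches_to_eq: "switches_to (\<lambda>y. y = a) h b \<longleftrightarrow> (if b then 0 < a \<and> a \<le> h else 0 \<le> a \<and> a < h)"
  unfolding switches_to_def by (cases b) (auto intro: exI[of _ a] exI[of _ "a - 1"])

lemma switches_to_ge: "switches_to (\<lambda>y. a \<le> y) h b \<longleftrightarrow> b \<and> 0 < a \<and> a \<le> h"
  unfolding switches_to_def by (cases b) (auto intro: exI[of _ "a - 1"])

lemma switches_to_le: "switches_to (\<lambda>y. y \<le> a) h b \<longleftrightarrow> \<not> b \<and> 0 \<le> a \<and> a < h"
  unfolding switches_to_def by (cases b) (auto intro: exI[of _ a])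

lemma switches_to_satisfiable: "switches_to P h b \<Longrightarrow> \<exists>y. 0 \<le> y \<and> y \<le> h \<and> P y"
proof -
  assume "switches_to P h b"
  then obtain k where "0 \<le> k" "k < h" "P k \<noteq> b" "P (k + 1) = b" unfolding switches_to_def by blast
  then show ?thesis
  proof (cases "P k")
    case True
    with \<open>0 \<le> k\<close> \<open>k < h\<close> show ?thesis by (intro exI[of _ k]) simp
  next
    case False
    with \<open>0 \<le> k\<close> \<open>k < h\<close> \<open>P k \<noteq> b\<close> \<open>P (k + 1) = b\<close> show ?thesis
      by (intro exI[of _ "k + 1"]) simp
  qed
qed

locale fds_construction = signed_graph +
  fixes parent rank :: "nat \<Rightarrow> nat"
  assumes parent_arc: "\<And>v. v < n \<Longrightarrow> in_degree E v \<noteq> 0 \<Longrightarrow> \<exists>s. (parent v, v, s) \<in> E"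
    and rank_parent_less: "\<And>v. v < n \<Longrightarrow> \<not> is_root v \<Longrightarrow> rank (parent v) < rank v"
    and rank_less: "\<And>v. v < n \<Longrightarrow> rank v < n"
begin

definition parallel :: "nat \<Rightarrow> nat \<Rightarrow> bool" where
  "parallel j i \<longleftrightarrow> (j, i, True) \<in> E \<and> (j, i, False) \<in> E"

definition negative_only :: "nat \<Rightarrow> nat \<Rightarrow> bool" where
  "negative_only j i \<longleftrightarrow> (j, i, False) \<in> E \<and> (j, i, True) \<notin> E"

lemma sign_unique: "\<not> parallel j i \<Longrightarrow> (j, i, s) \<in> E \<Longrightarrow> (j, i, s') \<in> E \<longleftrightarrow> s' = s"
  unfolding parallel_def by (cases s; cases s') auto

lemma negative_only_iff: "\<not> parallel j i \<Longrightarrow> (j, i, s) \<in> E \<Longrightarrow> negative_only j i \<longleftrightarrow> \<not> s"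
  unfolding parallel_def negative_only_def by (cases s) auto

lemma out_degree_pos: "(j, i, s) \<in> E \<Longrightarrow> 1 \<le> out_degree E j"
  using out_degree_eq_0_iff[of j] by (cases "out_degree E j") auto

lemma finite_out_sign: "finite {k. (j, k, s) \<in> E}"
  by (rule finite_subset[of _ "{..<n}"]) (auto dest: arc_bounds)

lemma parallel_out_degree: "parallel j i \<Longrightarrow> 2 \<le> out_degree E j"
proof -
  assume "parallel j i"
  then have "{k. (j, k, s) \<in> E} \<noteq> {}" for s unfolding parallel_def by (cases s) auto
  then have "card {k. (j, k, s) \<in> E} \<noteq> 0" for s using finite_out_sign by simp
  from this[of True] this[of False] show ?thesis unfolding out_degree_def by linarith
qed

definition hi :: "nat \<Rightarrow> int" where
  "hi v = (if in_degree E v = 0 \<and> out_degree E v = 0 then 0 else max 1 (int (out_degree E v)))"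

text \<open>The value taken by an active vertex. It is 2 only when the two out-arcs of v are a parallel
  pair to one target: then the domain of v is {0, 1, 2}, the parent literal must be y = 1 to
  switch in both directions, and the quiet values of v have to avoid 1.\<close>

definition high :: "nat \<Rightarrow> int" where
  "high v = (if out_degree E v = 2 \<and> (\<exists>i. parallel v i) then 2 else 1)"

text \<open>The negation flag is propagated along parent arcs through non-roots. The rank decreases
  along such arcs and stays below n, so unfolding the recursion n + 1 times reaches a fixed
  point; the fuel k only serves to make the definition total.\<close>

primrec inverted_upto :: "nat \<Rightarrow> nat \<Rightarrow> bool" where
  "inverted_upto 0 v = False"
| "inverted_upto (Suc k) v =
     ((\<not> is_root (parent v) \<and> inverted_upto k (parent v)) \<noteq> negative_only (parent v) v)"

definition inverted :: "nat \<Rightarrow> bool" where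
  "inverted v = inverted_upto (Suc n) v"

definition rest :: "nat \<Rightarrow> int" where
  "rest v = (if in_degree E v \<noteq> 0 \<and> inverted v then high v else 0)"

text \<open>The literal contributed by the value y of the in-neighbour j of i. Along the parent arc it is
  false on the quiet values of the parent (0 and high j if j branches, rest j otherwise).\<close>

definition literal :: "nat \<Rightarrow> nat \<Rightarrow> int \<Rightarrow> bool" where
  "literal i j y =
     (if j = parent i then
        (if parallel j i then y = 3 - high j else if 2 \<le> out_degree E j then 2 \<le> y else y = 1 - rest j)
      else (if parallel j i then y = 1 else if (j, i, \<not> inverted i) \<in> E then 1 \<le> y else y \<le> 0))"

definition in_nbrs :: "nat \<Rightarrow> nat set" where
  "in_nbrs i = {j. \<exists>s. (j, i, s) \<in> E}"

definition active :: "(nat \<Rightarrow> int) \<Rightarrow> nat \<Rightarrow> bool" where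
  "active x i \<longleftrightarrow> inverted i \<noteq> (\<forall>j \<in> in_nbrs i. literal i j (x j))"

definition fds :: "(nat \<Rightarrow> int) \<Rightarrow> nat \<Rightarrow> int" where
  "fds x i = (if i < n \<and> in_degree E i \<noteq> 0 \<and> active x i then high i else 0)"

lemma parent_less: "v < n \<Longrightarrow> in_degree E v \<noteq> 0 \<Longrightarrow> parent v < n"
  using parent_arc arc_bounds by blast

lemma inverted_upto_stable:
  "u < n \<Longrightarrow> \<not> is_root u \<Longrightarrow> rank u < k \<Longrightarrow> inverted_upto (Suc k) u = inverted_upto k u"
proof (induction k arbitrary: u)
  case (Suc k)
  have "in_degree E u \<noteq> 0" using Suc.prems(2) unfolding is_root_def by simp
  then have "parent u < n" using parent_less Suc.prems(1) by blast
  moreover have "rank (parent u) < k" using rank_parent_less Suc.prems by fastforce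
  ultimately have "\<not> is_root (parent u) \<Longrightarrow> inverted_upto (Suc k) (parent u) = inverted_upto k (parent u)"
    using Suc.IH by blast
  then show ?case by (simp only: inverted_upto.simps) metis
qed simp

lemma inverted_parent:
  assumes "v < n" and "in_degree E v \<noteq> 0"
  shows "inverted v = ((\<not> is_root (parent v) \<and> inverted (parent v)) \<noteq> negative_only (parent v) v)"
proof -
  have "parent v < n" using parent_less assms by blast
  then have "\<not> is_root (parent v) \<Longrightarrow> inverted_upto (Suc n) (parent v) = inverted_upto n (parent v)"
    using inverted_upto_stable rank_less by blast
  then show ?thesis unfolding inverted_def by (simp only: inverted_upto.simps) metis
qed

lemma hi_arc: "(j, i, s) \<in> E \<Longrightarrow> hi j = max 1 (int (out_degree E j))"
  using out_degree_pos unfolding hi_def by fastforce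

lemma high_cases: "high v = 1 \<or> high v = 2"
  unfolding high_def by simp

lemma high_two_parallel:
  assumes "high j = 2" and "(j, i, s) \<in> E"
  shows "parallel j i"
proof -
  obtain t where out: "out_degree E j = 2" and t: "parallel j t"
    using assms(1) unfolding high_def by (auto split: if_splits)
  have mem: "t \<in> {k. (j, k, b) \<in> E}" for b using t unfolding parallel_def by (cases b) auto
  then have nonzero: "card {k. (j, k, b) \<in> E} \<noteq> 0" for b
    using finite_out_sign[of j b] by (auto simp: card_eq_0_iff)
  have "card {k. (j, k, b) \<in> E} = 1" for b
    using out nonzero[of True] nonzero[of False] unfolding out_degree_def by (cases b) simp_all
  with mem have "{k. (j, k, b) \<in> E} = {t}" for b by (metis card_1_singletonE singletonD)
  from this[of s] assms(2) have "i = t" by blast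
  with t show ?thesis by simp
qed

lemma high_le_hi: "in_degree E v \<noteq> 0 \<Longrightarrow> high v \<le> hi v"
  unfolding high_def hi_def by auto

lemma parallel_threshold_bounds:
  assumes par: "parallel j i"
  shows "0 < 3 - high j \<and> 3 - high j < hi j"
proof -
  have hi_j: "hi j = max 1 (int (out_degree E j))"
    using par unfolding parallel_def by (blast intro: hi_arc)
  show ?thesis
  proof (cases "high j = 1")
    case True
    then have "out_degree E j \<noteq> 2" using par unfolding high_def by (auto split: if_splits)
    then show ?thesis using True parallel_out_degree[OF par] hi_j by simp
  next
    case False
    then have "high j = 2" using high_cases by blast
    then show ?thesis using hi_j unfolding high_def by (auto split: if_splits)
  qed
qed

lemma inverted_below_branching:
  "i < n \<Longrightarrow> in_degree E i \<noteq> 0 \<Longrightarrow> 2 \<le> out_degree E (parent i) \<Longrightarrow>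
     inverted i = negative_only (parent i) i"
  using inverted_parent unfolding is_root_def by simp

lemma inverted_below_relay:
  assumes i: "i < n" "in_degree E i \<noteq> 0" and out: "out_degree E (parent i) = 1"
  shows "inverted i = ((rest (parent i) = 1) \<noteq> negative_only (parent i) i)"
proof -
  have "high (parent i) = 1" using out unfolding high_def by simp
  then have "(\<not> is_root (parent i) \<and> inverted (parent i)) \<longleftrightarrow> rest (parent i) = 1"
    using out unfolding is_root_def rest_def by auto
  then show ?thesis using inverted_parent[OF i] by simp
qed

lemma literal_parent_switches:
  assumes i: "i < n" "in_degree E i \<noteq> 0"
  shows "switches_to (literal i (parent i)) (hi (parent i)) b \<longleftrightarrow> (parent i, i, b \<noteq> inverted i) \<in> E"
proof -
  define j where "j = parent i"
  obtain s0 where s0: "(j, i, s0) \<in> E" using parent_arc[OF i] unfolding j_def by blast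
  note hi_j = hi_arc[OF s0]
  consider (par) "parallel j i" | (fan) "\<not> parallel j i" "2 \<le> out_degree E j"
    | (relay) "\<not> parallel j i" "out_degree E j = 1"
    using out_degree_pos[OF s0] by linarith
  then have "switches_to (literal i j) (hi j) b \<longleftrightarrow> (j, i, b \<noteq> inverted i) \<in> E"
  proof cases
    case par
    have "literal i j = (\<lambda>y. y = 3 - high j)" using par unfolding literal_def j_def by auto
    moreover have "(j, i, c) \<in> E" for c using par unfolding parallel_def by (cases c) auto
    ultimately show ?thesis using parallel_threshold_bounds[OF par] by (simp add: switches_to_eq)
  next
    case fan
    have "literal i j = (\<lambda>y. 2 \<le> y)" using fan unfolding literal_def j_def by auto
    then have "switches_to (literal i j) (hi j) b \<longleftrightarrow> b"
      using hi_j fan(2) by (simp add: switches_to_ge)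
    moreover have "(j, i, b \<noteq> inverted i) \<in> E \<longleftrightarrow> b"
      using inverted_below_branching[OF i] fan sign_unique[OF fan(1) s0] negative_only_iff[OF fan(1) s0]
      unfolding j_def by auto
    ultimately show ?thesis by simp
  next
    case relay
    have "rest j = 0 \<or> rest j = 1" using relay unfolding rest_def high_def by simp
    moreover have "literal i j = (\<lambda>y. y = 1 - rest j)"
      using relay unfolding literal_def j_def by auto
    ultimately have "switches_to (literal i j) (hi j) b \<longleftrightarrow> b = (rest j = 0)"
      using hi_j relay(2) by (elim disjE) (simp_all add: switches_to_eq)
    moreover have "(j, i, b \<noteq> inverted i) \<in> E \<longleftrightarrow> (b \<noteq> inverted i) = s0"
      by (rule sign_unique[OF relay(1) s0])
    then have "(j, i, b \<noteq> inverted i) \<in> E \<longleftrightarrow> b = (rest j = 0)"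
      using inverted_below_relay[OF i] relay negative_only_iff[OF relay(1) s0] \<open>rest j = 0 \<or> rest j = 1\<close>
      unfolding j_def by (cases s0; cases b) auto
    ultimately show ?thesis by simp
  qed
  then show ?thesis unfolding j_def .
qed

lemma literal_other_switches:
  assumes j: "j \<in> in_nbrs i" "j \<noteq> parent i"
  shows "switches_to (literal i j) (hi j) b \<longleftrightarrow> (j, i, b \<noteq> inverted i) \<in> E"
proof -
  obtain s0 where s0: "(j, i, s0) \<in> E" using j(1) unfolding in_nbrs_def by blast
  note hi_j = hi_arc[OF s0]
  consider (par) "parallel j i" | (agree) "\<not> parallel j i" "(j, i, \<not> inverted i) \<in> E"
    | (disagree) "\<not> parallel j i" "(j, i, \<not> inverted i) \<notin> E"
    by blast
  then show ?thesis
  proof cases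
    case par
    have "literal i j = (\<lambda>y. y = 1)" using par j(2) unfolding literal_def by auto
    moreover have "(j, i, c) \<in> E" for c using par unfolding parallel_def by (cases c) auto
    ultimately show ?thesis using hi_j parallel_out_degree[OF par] by (simp add: switches_to_eq)
  next
    case agree
    have "literal i j = (\<lambda>y. 1 \<le> y)" using agree j(2) unfolding literal_def by auto
    then have "switches_to (literal i j) (hi j) b \<longleftrightarrow> b" using hi_j by (simp add: switches_to_ge)
    moreover have "(j, i, b \<noteq> inverted i) \<in> E \<longleftrightarrow> b"
      using sign_unique[OF agree] by (cases b) auto
    ultimately show ?thesis by simp
  next
    case disagree
    have "literal i j = (\<lambda>y. y \<le> 0)" using disagree j(2) unfolding literal_def by auto
    then have "switches_to (literal i j) (hi j) b \<longleftrightarrow> \<not> b"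
      using hi_j by (simp add: switches_to_le less_max_iff_disj)
    moreover have "s0 = inverted i" using disagree(2) s0 by (cases s0; cases "inverted i") auto
    then have "(j, i, b \<noteq> inverted i) \<in> E \<longleftrightarrow> \<not> b"
      using sign_unique[OF disagree(1) s0] by (cases b) auto
    ultimately show ?thesis by simp
  qed
qed

lemma arc_iff_literal_switches:
  assumes "i < n" and "in_degree E i \<noteq> 0" and "j \<in> in_nbrs i"
  shows "(j, i, s) \<in> E \<longleftrightarrow> switches_to (literal i j) (hi j) (s \<noteq> inverted i)"
proof -
  have "switches_to (literal i j) (hi j) (s \<noteq> inverted i) \<longleftrightarrow> (j, i, (s \<noteq> inverted i) \<noteq> inverted i) \<in> E"
    using literal_parent_switches[OF assms(1,2)] literal_other_switches[OF assms(3)] by blast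
  then show ?thesis by (cases "inverted i") simp_all
qed

abbreviation states :: "(nat \<Rightarrow> int) set" where
  "states \<equiv> state_space n (\<lambda>_. 0) hi"

lemma hi_nonneg: "0 \<le> hi v"
  unfolding hi_def by (simp add: le_max_iff_disj)

lemma in_nbrs_less: "j \<in> in_nbrs i \<Longrightarrow> j < n"
  unfolding in_nbrs_def using arc_bounds by blast

lemma high_pos: "0 < high v"
  using high_cases[of v] by auto

lemma fds_update_other:
  assumes "\<not> (i < n \<and> in_degree E i \<noteq> 0 \<and> j \<in> in_nbrs i)"
  shows "fds (x(j := y)) i = fds x i"
proof (cases "j \<in> in_nbrs i")
  case False
  then have "active (x(j := y)) i = active x i"
    unfolding active_def by (metis fun_upd_other)
  then show ?thesis by (simp add: fds_def)
qed (use assms in \<open>auto simp: fds_def\<close>)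

lemma fds_update_change:
  assumes "i < n" and "in_degree E i \<noteq> 0" and j: "j \<in> in_nbrs i"
  shows "(if s then fds (x(j := y)) i < fds (x(j := y + 1)) i
          else fds (x(j := y + 1)) i < fds (x(j := y)) i) \<longleftrightarrow>
         (\<forall>l \<in> in_nbrs i - {j}. literal i l (x l)) \<and>
         literal i j y \<noteq> (s \<noteq> inverted i) \<and> literal i j (y + 1) = (s \<noteq> inverted i)"
proof -
  define R where "R = (\<forall>l \<in> in_nbrs i - {j}. literal i l (x l))"
  have "active (x(j := z)) i \<longleftrightarrow> inverted i \<noteq> (literal i j z \<and> R)" for z
    unfolding active_def R_def using j by auto
  then show ?thesis
    unfolding R_def[symmetric] using assms(1,2) high_pos[of i]
    by (cases s; cases "inverted i") (auto simp: fds_def)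
qed

lemma literal_witness:
  assumes i: "i < n" "in_degree E i \<noteq> 0" and j: "j \<in> in_nbrs i" and k: "0 \<le> k" "k \<le> hi j"
  shows "\<exists>x \<in> states. x j = k \<and> (\<forall>l \<in> in_nbrs i - {j}. literal i l (x l))"
proof -
  have "\<exists>y. 0 \<le> y \<and> y \<le> hi l \<and> literal i l y" if l: "l \<in> in_nbrs i" for l
  proof -
    obtain s where "(l, i, s) \<in> E" using l unfolding in_nbrs_def by blast
    then have "switches_to (literal i l) (hi l) (s \<noteq> inverted i)"
      using arc_iff_literal_switches[OF i l] by blast
    then show ?thesis by (rule switches_to_satisfiable)
  qed
  then obtain w where w: "\<And>l. l \<in> in_nbrs i \<Longrightarrow> 0 \<le> w l \<and> w l \<le> hi l \<and> literal i l (w l)"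
    by metis
  define x where "x l = (if l = j then k else if l \<in> in_nbrs i then w l else 0)" for l
  have "x \<in> states"
    unfolding state_space_def x_def using w k hi_nonneg j by (auto dest: in_nbrs_less)
  moreover have "x j = k" by (simp add: x_def)
  moreover have "\<forall>l \<in> in_nbrs i - {j}. literal i l (x l)" using w unfolding x_def by auto
  ultimately show ?thesis by blast
qed

lemma interaction_graph_fds_arc:
  assumes "(j, i, s) \<in> interaction_graph n (\<lambda>_. 0) hi fds"
  shows "(j, i, s) \<in> E"
proof -
  obtain x where j: "j < n" and x: "x \<in> states" "x j < hi j"
    and change: "if s then fds x i < fds (x(j := x j + 1)) i else fds (x(j := x j + 1)) i < fds x i"
    using assms unfolding interaction_graph_def by (cases s) auto
  have valid: "i < n \<and> in_degree E i \<noteq> 0 \<and> j \<in> in_nbrs i"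
  proof (rule ccontr)
    assume "\<not> (i < n \<and> in_degree E i \<noteq> 0 \<and> j \<in> in_nbrs i)"
    then have "fds (x(j := x j + 1)) i = fds x i" by (rule fds_update_other)
    with change show False by (cases s) auto
  qed
  have "0 \<le> x j" using x(1) j unfolding state_space_def by auto
  moreover have "literal i j (x j) \<noteq> (s \<noteq> inverted i) \<and> literal i j (x j + 1) = (s \<noteq> inverted i)"
    using change fds_update_change[of i j s x "x j", unfolded fun_upd_triv] valid by simp
  ultimately have "switches_to (literal i j) (hi j) (s \<noteq> inverted i)"
    unfolding switches_to_def using x(2) by blast
  then show ?thesis using arc_iff_literal_switches valid by blast
qed

lemma arc_interaction_graph_fds:
  assumes arc: "(j, i, s) \<in> E"
  shows "(j, i, s) \<in> interaction_graph n (\<lambda>_. 0) hi fds"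
proof -
  have valid: "j < n" "i < n" "in_degree E i \<noteq> 0" "j \<in> in_nbrs i"
    using arc arc_bounds in_degree_eq_0_iff unfolding in_nbrs_def by blast+
  then have "switches_to (literal i j) (hi j) (s \<noteq> inverted i)"
    using arc arc_iff_literal_switches by blast
  then obtain k where k: "0 \<le> k" "k < hi j"
    and step: "literal i j k \<noteq> (s \<noteq> inverted i)" "literal i j (k + 1) = (s \<noteq> inverted i)"
    unfolding switches_to_def by blast
  obtain x where x: "x \<in> states" "x j = k" and others: "\<forall>l \<in> in_nbrs i - {j}. literal i l (x l)"
    using literal_witness[OF valid(2-4) k(1)] k(2) by fastforce
  have "if s then fds x i < fds (x(j := x j + 1)) i else fds (x(j := x j + 1)) i < fds x i"
    using fds_update_change[of i j s x "x j", unfolded fun_upd_triv] valid others step x(2) by simp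
  then show ?thesis
    unfolding interaction_graph_def using valid x k by auto
qed

lemma interaction_graph_fds: "interaction_graph n (\<lambda>_. 0) hi fds = E"
  using interaction_graph_fds_arc arc_interaction_graph_fds by auto

section \<open>Convergence to the rest state\<close>

definition quiet :: "nat \<Rightarrow> int \<Rightarrow> bool" where
  "quiet v y \<longleftrightarrow> (if 2 \<le> out_degree E v then y = 0 \<or> y = high v else y = rest v)"

lemma root_quiet: "is_root v \<Longrightarrow> quiet v (fds x v)"
  unfolding quiet_def fds_def rest_def is_root_def by auto

lemma quiet_not_literal:
  assumes v: "v < n" "in_degree E v \<noteq> 0" and quiet: "quiet (parent v) y"
  shows "\<not> literal v (parent v) y"
proof -
  define j where "j = parent v"
  obtain s where s: "(j, v, s) \<in> E" using parent_arc[OF v] unfolding j_def by blast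
  consider (par) "parallel j v" | (fan) "\<not> parallel j v" "2 \<le> out_degree E j"
    | (relay) "\<not> parallel j v" "\<not> 2 \<le> out_degree E j"
    by blast
  then have "\<not> literal v j y"
  proof cases
    case par
    then show ?thesis
      using quiet parallel_out_degree[OF par] high_cases[of j] unfolding quiet_def literal_def j_def by auto
  next
    case fan
    have "high j = 1" using high_cases[of j] high_two_parallel[OF _ s] fan(1) by blast
    then show ?thesis using quiet fan unfolding quiet_def literal_def j_def by auto
  next
    case relay
    then show ?thesis using quiet unfolding quiet_def literal_def j_def by auto presburger
  qed
  then show ?thesis unfolding j_def .
qed

lemma fds_quiet_parent:
  assumes v: "v < n" "in_degree E v \<noteq> 0" and quiet: "quiet (parent v) (x (parent v))"
  shows "fds x v = rest v"
proof -
  have "parent v \<in> in_nbrs v" using parent_arc[OF v] unfolding in_nbrs_def by blast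
  with quiet_not_literal[OF v quiet] have "active x v \<longleftrightarrow> inverted v" unfolding active_def by blast
  with v show ?thesis unfolding fds_def rest_def by simp
qed

lemma quiet_after_rank: "v < n \<Longrightarrow> rank v < t \<Longrightarrow> quiet v ((fds ^^ t) x v)"
proof (induction "rank v" arbitrary: v t rule: less_induct)
  case less
  then obtain t' where t: "t = Suc t'" by (cases t) auto
  show ?case
  proof (cases "is_root v")
    case True
    then show ?thesis unfolding t using root_quiet by simp
  next
    case False
    then have v: "in_degree E v \<noteq> 0" "out_degree E v < 2" unfolding is_root_def by auto
    have "rank (parent v) < rank v" using rank_parent_less less.prems(1) False by blast
    moreover have "parent v < n" using parent_less less.prems(1) v(1) by blast
    ultimately have "quiet (parent v) ((fds ^^ t') x (parent v))"
      using less.hyps less.prems(2) t by simp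
    then have "fds ((fds ^^ t') x) v = rest v" using fds_quiet_parent less.prems(1) v(1) by blast
    then show ?thesis unfolding t quiet_def using v(2) by simp
  qed
qed

lemma fds_iterate_const: "(fds ^^ Suc n) x = rest"
proof
  fix v
  show "(fds ^^ Suc n) x v = rest v"
  proof (cases "v < n \<and> in_degree E v \<noteq> 0")
    case True
    then have "parent v < n" using parent_less by blast
    then have "quiet (parent v) ((fds ^^ n) x (parent v))" using quiet_after_rank rank_less by blast
    then show ?thesis using fds_quiet_parent True by simp
  next
    case False
    moreover have "v < n" if "in_degree E v \<noteq> 0"
      using that in_degree_eq_0_iff arc_bounds by meson
    ultimately show ?thesis unfolding fds_def rest_def by auto
  qed
qed

lemma is_FDS_fds: "is_FDS n (\<lambda>_. 0) hi fds"
  unfolding is_FDS_def state_space_def fds_def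
  using hi_nonneg high_le_hi high_pos by (auto simp: less_imp_le)

lemma degree_bounded_fds: "degree_bounded n (\<lambda>_. 0) hi fds"
  unfolding degree_bounded_def interaction_graph_fds Let_def hi_def by auto

end

theorem theorem3:
  fixes n :: nat and E :: "(nat \<times> nat \<times> bool) set"
  assumes "signed_digraph n E"
    and "connected_sd n E"
    and "\<not> signed_cycle n E"
  shows "\<exists>lo hi f. is_FDS n lo hi f \<and> interaction_graph n lo hi f = E \<and>
           degree_bounded n lo hi f \<and>
           (\<exists>c. \<forall>x \<in> state_space n lo hi. (f ^^ (n + 1)) x = c)"
proof -
  interpret signed_graph n E by unfold_locales (rule assms(1))
  obtain parent rank where
    "\<forall>v < n. in_degree E v \<noteq> 0 \<longrightarrow> (\<exists>s. (parent v, v, s) \<in> E)"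
    "\<forall>v < n. \<not> is_root v \<longrightarrow> rank (parent v) < rank v" "\<forall>v < n. rank v < n"
    using ex_parent_rank[OF assms(2,3)] by blast
  then interpret fds_construction n E parent rank by unfold_locales auto
  show ?thesis
    using is_FDS_fds interaction_graph_fds degree_bounded_fds fds_iterate_const by fastforce
qed

end
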